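(* Let $L$ be a finite field of characteristic $2$ and cardinality $q>2$ with $q\not\equiv 2,4 \pmod 5$. Let $f\colon L\to L$, $f(x)=x^s$, be a power permutation of $L$ (i.e. $\gcd(s,q-1)=1$). If $f$ is almost perfect nonlinear, then there exists $a\in L^{\times}$ such that $\widehat{f}(a)\equiv 0 \pmod 5$.
   Context: Let $\mu$ be the canonical additive character of $L$, $\mu(x)=\exp(2i\pi\,\mathrm{Tr}(x)/2)=(-1)^{\mathrm{Tr}(x)}$, where $\mathrm{Tr}$ is the absolute trace of $L/\mathbb{F}_2$. The Fourier coefficient of a map $f\colon L\to L$ at $a\in L$ is $\widehat{f}(a)=\sum_{x\in L}\mu(ax+f(x))$; here these are rational integers. A map $f\colon L\to L$ is almost perfect nonlinear (APN) if for every $u\in L^{\times}$ the map $x\mapsto f(x+u)+f(x)$ is two-to-one. *)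

theory Defs
  imports Main "HOL-Library.Cardinality"
begin

definition ext_degree :: "'a::{field,finite} itself \<Rightarrow> nat" where
  "ext_degree _ = (THE n. card (UNIV :: 'a set) = 2 ^ n)"

definition abs_trace :: "'a::{field,finite} \<Rightarrow> 'a" where
  "abs_trace x = (\<Sum>i<ext_degree TYPE('a). x ^ (2 ^ i))"

definition can_char :: "'a::{field,finite} \<Rightarrow> int" where
  "can_char x = (if abs_trace x = 0 then 1 else -1)"

definition fourier_coeff :: "('a::{field,finite} \<Rightarrow> 'a) \<Rightarrow> 'a \<Rightarrow> int" where
  "fourier_coeff f a = (\<Sum>x\<in>UNIV. can_char (a * x + f x))"

definition two_to_one :: "('a \<Rightarrow> 'b) \<Rightarrow> bool" where
  "two_to_one g \<longleftrightarrow> (\<forall>b. card {x. g x = b} = 0 \<or> card {x. g x = b} = 2)"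

definition APN :: "('a::{field,finite} \<Rightarrow> 'a) \<Rightarrow> bool" where
  "APN f \<longleftrightarrow> (\<forall>u. u \<noteq> 0 \<longrightarrow> two_to_one (\<lambda>x. f (x + u) + f x))"

end

theory Submission
  imports
    Defs
    "HOL-Computational_Algebra.Polynomial"
    "HOL-Computational_Algebra.Primes"
    "HOL-Algebra.FiniteProduct"
begin

text \<open>
  Write \<open>W(a)\<close> for the Fourier coefficients of \<open>f\<close> and \<open>q = |L|\<close>. In
  characteristic 2 the fourth moment \<open>\<Sum>\<^sub>a W(a)\<^sup>4\<close> is \<open>q\<close> times the sum of
  the squared autocorrelations of the Boolean function \<open>Tr(f)\<close>. Summed over all
  components \<open>Tr(bf)\<close>, these sums become \<open>q\<close> times the number of solutions
  \<open>(u, x, z)\<close> of \<open>f(z+u) + f(z) = f(x+u) + f(x)\<close>, which the APN property fixes at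
  \<open>q\<^sup>2 + (q-1)2q\<close>; for a power map all components with \<open>b \<noteq> 0\<close> contribute
  equally, hence \<open>\<Sum>\<^sub>a W(a)\<^sup>4 = 2q\<^sup>3\<close>. A permutation has
  \<open>W(0) = 0\<close>, so if no \<open>W(a)\<close> with \<open>a \<noteq> 0\<close> were divisible by 5, Fermat's
  little theorem would give \<open>2q\<^sup>3 \<equiv> q - 1 (mod 5)\<close>, which holds only for
  \<open>q \<equiv> 2, 4 (mod 5)\<close>.
\<close>

lemma add_self_CHAR_2:
  assumes "CHAR('a::ring_1) = 2"
  shows "(x::'a) + x = 0"
  by (metis uminus_CHAR_2[OF assms] add.right_inverse)

lemma add_eq_0_iff_CHAR_2:
  assumes "CHAR('a::ring_1) = 2"
  shows "(x::'a) + y = 0 \<longleftrightarrow> x = y"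
  by (simp flip: minus_CHAR_2[OF assms])

lemma card_field_ge_2: "2 \<le> CARD('a::{field,finite})"
  using card_mono[of UNIV "{0, 1 :: 'a}"] by simp

lemma nonzero_power_card_minus_1_eq_1:
  fixes x :: "'a::{field,finite}"
  assumes "x \<noteq> 0"
  shows "x ^ (CARD('a) - 1) = 1"
proof -
  define G :: "'a monoid" where "G = \<lparr>carrier = UNIV - {0}, mult = (*), one = 1\<rparr>"
  have "comm_group G"
    by (rule comm_groupI) (auto simp: G_def mult.commute intro!: bexI[of _ "inverse _"])
  moreover have "x [^]\<^bsub>G\<^esub> n = x ^ n" for n
    by (induction n) (simp_all add: G_def nat_pow_def)
  moreover have "card (carrier G) = CARD('a) - 1"
    by (simp add: G_def card_Diff_singleton)
  ultimately show ?thesis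
    using comm_group.power_order_eq_one[of G x] assms by (simp add: G_def)
qed

lemma power_card_eq_same:
  fixes x :: "'a::{field,finite}"
  shows "x ^ CARD('a) = x"
proof (cases "x = 0")
  case False
  have "CARD('a) = Suc (CARD('a) - 1)"
    using finite_UNIV_card_ge_0[where ?'a = 'a] by simp
  then show ?thesis
    by (metis False nonzero_power_card_minus_1_eq_1 power_Suc mult_1_right)
qed simp

lemma card_UNIV_eq_2_power_mult_card_subgroup:
  fixes S :: "'a::{finite,ab_group_add} set"
  assumes self_inverse: "\<And>x::'a. x + x = 0"
    and "0 \<in> S" and "\<And>x y. x \<in> S \<Longrightarrow> y \<in> S \<Longrightarrow> x + y \<in> S"
  shows "\<exists>k. CARD('a) = 2 ^ k * card S"
  using assms(2,3)
proof (induction "card (UNIV - S)" arbitrary: S rule: less_induct)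
  case (less S)
  show ?case
  proof (cases "S = UNIV")
    case True
    then show ?thesis by (intro exI[of _ 0]) simp
  next
    case False
    then obtain a where a: "a \<notin> S" by auto
    define S' where "S' = S \<union> (+) a ` S"
    have "S \<inter> (+) a ` S = {}"
    proof (rule ccontr)
      assume "S \<inter> (+) a ` S \<noteq> {}"
      then obtain x where "x \<in> S" "a + x \<in> S" by auto
      then have "x + (a + x) \<in> S" using less.prems(2) by blast
      then show False
        using a self_inverse[of x] by (simp add: algebra_simps)
    qed
    then have card_S': "card S' = 2 * card S"
      by (simp add: S'_def card_Un_disjoint card_image)
    have "0 \<in> S'" "a \<in> S'"
      using less.prems(1) by (auto simp: S'_def intro: image_eqI[of _ _ 0])
    moreover have "x + y \<in> S'" if "x \<in> S'" "y \<in> S'" for x y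
      using that less.prems(2) self_inverse[of a] by (auto simp: S'_def algebra_simps)
    moreover have "card (UNIV - S') < card (UNIV - S)"
      using a \<open>a \<in> S'\<close> by (intro psubset_card_mono) (auto simp: S'_def)
    ultimately obtain k where "CARD('a) = 2 ^ k * card S'"
      using less.hyps by blast
    then show ?thesis
      using card_S' by (intro exI[of _ "Suc k"]) simp
  qed
qed

lemma card_eq_2_power_ext_degree:
  assumes "CHAR('a::{field,finite}) = 2"
  shows "CARD('a) = 2 ^ ext_degree TYPE('a)"
proof -
  obtain k where k: "CARD('a) = 2 ^ k"
    using card_UNIV_eq_2_power_mult_card_subgroup[of "{0::'a}"] add_self_CHAR_2[OF assms]
    by auto
  then have "ext_degree TYPE('a) = k"
    unfolding ext_degree_def by (rule the_equality) (simp add: k power_inject_exp)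
  with k show ?thesis by simp
qed

lemma abs_trace_add:
  assumes "CHAR('a::{field,finite}) = 2"
  shows "abs_trace ((x::'a) + y) = abs_trace x + abs_trace y"
proof -
  have "(x + y) ^ (2 ^ i) = x ^ (2 ^ i) + y ^ (2 ^ i)" for i
    by (rule freshmans_dream') (use assms in auto)
  then show ?thesis
    by (simp add: abs_trace_def sum.distrib)
qed

lemma abs_trace_square:
  assumes "CHAR('a::{field,finite}) = 2"
  shows "abs_trace (x::'a) ^ 2 = abs_trace x"
proof -
  define n where "n = ext_degree TYPE('a)"
  have "abs_trace x ^ 2 = (\<Sum>i<n. (x ^ (2 ^ i)) ^ 2)"
    unfolding abs_trace_def n_def by (rule freshmans_dream_sum) (use assms in auto)
  also have "\<dots> = (\<Sum>i<n. x ^ (2 ^ Suc i))"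
    by (simp add: mult.commute flip: power_mult)
  also have "\<dots> = (\<Sum>i<Suc n. x ^ (2 ^ i)) - x"
    by (subst sum.lessThan_Suc_shift) simp
  also have "\<dots> = (\<Sum>i<n. x ^ (2 ^ i))"
    using power_card_eq_same[of x] card_eq_2_power_ext_degree[OF assms] by (simp add: n_def)
  finally show ?thesis
    by (simp add: abs_trace_def n_def)
qed

lemma abs_trace_eq_0_or_1:
  assumes "CHAR('a::{field,finite}) = 2"
  shows "abs_trace (x::'a) = 0 \<or> abs_trace x = 1"
proof -
  have "abs_trace x * (abs_trace x - 1) = 0"
    using abs_trace_square[OF assms, of x] by (simp add: algebra_simps power2_eq_square)
  then show ?thesis by simp
qed

text \<open>The trace is a polynomial function of degree \<open>2^(n-1) < 2^n = |L|\<close>, so it cannot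
  vanish on all of \<open>L\<close>.\<close>
lemma abs_trace_not_identically_0:
  assumes "CHAR('a::{field,finite}) = 2"
  shows "\<exists>x::'a. abs_trace x \<noteq> 0"
proof -
  define n where "n = ext_degree TYPE('a)"
  have q: "CARD('a) = 2 ^ n"
    using card_eq_2_power_ext_degree[OF assms] by (simp add: n_def)
  have "n \<ge> 1"
    using q card_field_ge_2[where 'a = 'a] by (cases n) simp_all
  define P :: "'a poly" where "P = (\<Sum>i<n. monom 1 (2 ^ i))"
  have coeff_P: "coeff P j = (\<Sum>i<n. if 2 ^ i = j then 1 else 0)" for j
    by (simp add: P_def coeff_sum coeff_monom)
  have "coeff P (2 ^ (n - 1)) = (\<Sum>i<n. if i = n - 1 then 1 else 0)"
    unfolding coeff_P by (intro sum.cong refl) (simp add: power_inject_exp)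
  then have "P \<noteq> 0"
    using \<open>n \<ge> 1\<close> by auto
  have "degree P \<le> 2 ^ (n - 1)"
  proof (rule degree_le, intro allI impI)
    fix j :: nat
    assume "2 ^ (n - 1) < j"
    moreover have "(2::nat) ^ i \<le> 2 ^ (n - 1)" if "i < n" for i
      using that by (intro power_increasing) auto
    ultimately show "coeff P j = 0"
      unfolding coeff_P by (intro sum.neutral) fastforce
  qed
  also have "(2::nat) ^ (n - 1) < 2 ^ n"
    using \<open>n \<ge> 1\<close> by (intro power_strict_increasing) auto
  finally have "card {x. poly P x = 0} < 2 ^ n"
    using card_poly_roots_bound[OF \<open>P \<noteq> 0\<close>] by linarith
  then have "{x. poly P x = 0} \<noteq> UNIV"
    using q by auto
  moreover have "poly P x = abs_trace x" for x
    by (simp add: P_def abs_trace_def n_def poly_sum poly_monom)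
  ultimately show ?thesis by auto
qed

lemma can_char_0 [simp]: "can_char (0::'a::{field,finite}) = 1"
  by (simp add: can_char_def abs_trace_def power_0_left)

lemma can_char_add:
  assumes "CHAR('a::{field,finite}) = 2"
  shows "can_char ((x::'a) + y) = can_char x * can_char y"
  using abs_trace_eq_0_or_1[OF assms, of x] abs_trace_eq_0_or_1[OF assms, of y]
    abs_trace_add[OF assms, of x y] add_self_CHAR_2[OF assms, of 1]
  by (auto simp: can_char_def)

lemma sum_can_char:
  assumes "CHAR('a::{field,finite}) = 2"
  shows "(\<Sum>x\<in>UNIV. can_char (x::'a)) = 0"
proof -
  obtain b :: 'a where "abs_trace b \<noteq> 0"
    using abs_trace_not_identically_0[OF assms] by blast
  then have "can_char b = -1"
    by (simp add: can_char_def)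
  have "(\<Sum>x\<in>UNIV. can_char (x::'a)) = (\<Sum>x\<in>UNIV. can_char (x + b))"
    by (rule sum.reindex_bij_witness[of _ "\<lambda>y. y + b" "\<lambda>y. y + b"])
       (simp_all add: add.assoc add_self_CHAR_2[OF assms])
  also have "\<dots> = - (\<Sum>x\<in>UNIV. can_char (x::'a))"
    by (simp add: can_char_add[OF assms] \<open>can_char b = -1\<close> sum_negf)
  finally show ?thesis by simp
qed

lemma sum_can_char_mult:
  assumes "CHAR('a::{field,finite}) = 2"
  shows "(\<Sum>a\<in>UNIV. can_char (a * y)) = (if (y::'a) = 0 then int CARD('a) else 0)"
proof (cases "y = 0")
  case False
  have "(\<Sum>a\<in>UNIV. can_char (a * y)) = (\<Sum>x\<in>UNIV. can_char (x::'a))"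
    by (rule sum.reindex_bij_witness[of _ "\<lambda>x. x / y" "\<lambda>a. a * y"]) (use False in auto)
  with False show ?thesis
    using sum_can_char[OF assms] by simp
qed simp

lemma bij_power_coprime:
  assumes "coprime s (CARD('a::{field,finite}) - 1)" and "s \<noteq> 0"
  shows "bij (\<lambda>x::'a. x ^ s)"
proof -
  obtain t k where "s * t = (CARD('a) - 1) * k + gcd s (CARD('a) - 1)"
    using bezout_nat[OF \<open>s \<noteq> 0\<close>] by blast
  then have st: "s * t = (CARD('a) - 1) * k + 1"
    using assms(1) by simp
  have "(x ^ s) ^ t = x" for x :: 'a
  proof (cases "x = 0")
    case True
    then show ?thesis
      using st \<open>s \<noteq> 0\<close> by (cases t) (simp_all add: power_0_left)
  next
    case False
    have "(x ^ s) ^ t = (x ^ (CARD('a) - 1)) ^ k * x"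
      by (simp add: st power_add flip: power_mult)
    with nonzero_power_card_minus_1_eq_1[OF False] show ?thesis
      by simp
  qed
  then have "inj (\<lambda>x::'a. x ^ s)"
    by (rule inj_on_inverseI)
  then show ?thesis
    by (simp add: bij_def finite_UNIV_inj_surj)
qed

definition autocorrelation :: "('a::{field,finite} \<Rightarrow> 'a) \<Rightarrow> 'a \<Rightarrow> 'a \<Rightarrow> int" where
  "autocorrelation f b u = (\<Sum>x\<in>UNIV. can_char (b * (f (x + u) + f x)))"

definition sum_of_squares_indicator :: "('a::{field,finite} \<Rightarrow> 'a) \<Rightarrow> 'a \<Rightarrow> int" where
  "sum_of_squares_indicator f b = (\<Sum>u\<in>UNIV. autocorrelation f b u ^ 2)"

lemma fourier_coeff_square:
  assumes "CHAR('a::{field,finite}) = 2"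
  shows "fourier_coeff f a ^ 2 = (\<Sum>u\<in>UNIV. can_char (a * u) * autocorrelation f 1 (u::'a))"
proof -
  note can_char_add = can_char_add[OF assms]
  have "fourier_coeff f a ^ 2 = (\<Sum>x\<in>UNIV. \<Sum>y\<in>UNIV. can_char (a * x + f x) * can_char (a * y + f y))"
    unfolding fourier_coeff_def power2_eq_square by (rule sum_product)
  also have "\<dots> = (\<Sum>x\<in>UNIV. \<Sum>u\<in>UNIV. can_char (a * x + f x) * can_char (a * (x + u) + f (x + u)))"
  proof (rule sum.cong[OF refl])
    fix x
    show "(\<Sum>y\<in>UNIV. can_char (a * x + f x) * can_char (a * y + f y)) =
        (\<Sum>u\<in>UNIV. can_char (a * x + f x) * can_char (a * (x + u) + f (x + u)))"
      by (rule sum.reindex_bij_witness[of _ "(+) x" "(+) x"])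
         (simp_all add: add_self_CHAR_2[OF assms] flip: add.assoc)
  qed
  also have "\<dots> = (\<Sum>x\<in>UNIV. \<Sum>u\<in>UNIV. can_char (a * u) * can_char (1 * (f (x + u) + f x)))"
  proof (intro sum.cong refl)
    fix x u :: 'a
    have "a * x + f x + (a * (x + u) + f (x + u)) = a * u + 1 * (f (x + u) + f x) + (a * x + a * x)"
      by (simp add: algebra_simps)
    then show "can_char (a * x + f x) * can_char (a * (x + u) + f (x + u)) =
        can_char (a * u) * can_char (1 * (f (x + u) + f x))"
      by (simp only: can_char_add[symmetric] add_self_CHAR_2[OF assms] add_0_right)
  qed
  also have "\<dots> = (\<Sum>u\<in>UNIV. can_char (a * u) * autocorrelation f 1 u)"
    by (subst sum.swap) (simp add: autocorrelation_def sum_distrib_left)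
  finally show ?thesis .
qed

lemma sum_fourier_coeff_power_4:
  assumes "CHAR('a::{field,finite}) = 2"
  shows "(\<Sum>a\<in>UNIV. fourier_coeff f (a::'a) ^ 4) = int CARD('a) * sum_of_squares_indicator f 1"
proof -
  define A where "A = autocorrelation f 1"
  have "(\<Sum>a\<in>UNIV. fourier_coeff f a ^ 4) =
      (\<Sum>a\<in>UNIV. \<Sum>u\<in>UNIV. \<Sum>v\<in>UNIV. can_char (a * (u + v)) * (A u * A v))"
  proof (rule sum.cong[OF refl])
    fix a :: 'a
    have "fourier_coeff f a ^ 4 = (fourier_coeff f a ^ 2) * (fourier_coeff f a ^ 2)"
      by simp
    also have "\<dots> = (\<Sum>u\<in>UNIV. \<Sum>v\<in>UNIV. (can_char (a * u) * A u) * (can_char (a * v) * A v))"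
      unfolding fourier_coeff_square[OF assms] A_def by (rule sum_product)
    also have "\<dots> = (\<Sum>u\<in>UNIV. \<Sum>v\<in>UNIV. can_char (a * (u + v)) * (A u * A v))"
      by (simp add: distrib_left can_char_add[OF assms] mult_ac)
    finally show "fourier_coeff f a ^ 4 = \<dots>" .
  qed
  also have "\<dots> = (\<Sum>u\<in>UNIV. \<Sum>v\<in>UNIV. \<Sum>a\<in>UNIV. can_char (a * (u + v)) * (A u * A v))"
    by (subst sum.swap, rule sum.cong[OF refl], rule sum.swap)
  also have "\<dots> = (\<Sum>u\<in>UNIV. \<Sum>v\<in>UNIV. (\<Sum>a\<in>UNIV. can_char (a * (u + v))) * (A u * A v))"
    by (simp only: sum_distrib_right)
  also have "\<dots> = (\<Sum>u\<in>UNIV. \<Sum>v\<in>UNIV. if u = v then int CARD('a) * (A u * A v) else 0)"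
    by (intro sum.cong refl) (simp add: sum_can_char_mult[OF assms] add_eq_0_iff_CHAR_2[OF assms])
  also have "\<dots> = (\<Sum>u\<in>UNIV. int CARD('a) * A u ^ 2)"
    by (simp add: power2_eq_square)
  finally show ?thesis
    by (simp add: sum_of_squares_indicator_def A_def sum_distrib_left)
qed

lemma sum_of_squares_indicator_0:
  "sum_of_squares_indicator (f :: 'a::{field,finite} \<Rightarrow> 'a) 0 = int CARD('a) ^ 3"
  by (simp add: sum_of_squares_indicator_def autocorrelation_def power2_eq_square power3_eq_cube)

lemma sum_sum_of_squares_indicator:
  assumes "CHAR('a::{field,finite}) = 2"
  shows "(\<Sum>b\<in>UNIV. sum_of_squares_indicator f b) =
    int CARD('a) * (\<Sum>u\<in>UNIV. \<Sum>x\<in>UNIV. int (card {z. f (z + u) + f z = f (x + u) + f (x::'a)}))"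
proof -
  define D where "D u x = f (x + u) + f x" for u x
  have "(\<Sum>b\<in>UNIV. sum_of_squares_indicator f b) =
      (\<Sum>b\<in>UNIV. \<Sum>u\<in>UNIV. \<Sum>x\<in>UNIV. \<Sum>z\<in>UNIV. can_char (b * (D u x + D u z)))"
    by (simp add: sum_of_squares_indicator_def autocorrelation_def power2_eq_square sum_product
        distrib_left can_char_add[OF assms] D_def)
  also have "\<dots> = (\<Sum>u\<in>UNIV. \<Sum>x\<in>UNIV. \<Sum>z\<in>UNIV. \<Sum>b\<in>UNIV. can_char (b * (D u x + D u z)))"
    by (subst sum.swap, rule sum.cong[OF refl], subst sum.swap,
        rule sum.cong[OF refl], rule sum.swap)
  also have "\<dots> = (\<Sum>u\<in>UNIV. \<Sum>x\<in>UNIV. \<Sum>z\<in>UNIV. if D u z = D u x then int CARD('a) else 0)"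
    by (intro sum.cong refl) (auto simp: sum_can_char_mult[OF assms] add_eq_0_iff_CHAR_2[OF assms])
  finally show ?thesis
    by (simp add: sum.If_cases sum_distrib_left mult.commute D_def)
qed

lemma card_derivative_fiber_APN:
  assumes "APN f" and "u \<noteq> 0"
  shows "card {z. f (z + u) + f z = f (x + u) + f x} = 2"
proof -
  have "two_to_one (\<lambda>z. f (z + u) + f z)"
    using assms by (simp add: APN_def)
  then have "card {z. f (z + u) + f z = f (x + u) + f x} \<in> {0, 2}"
    by (simp add: two_to_one_def)
  moreover have "x \<in> {z. f (z + u) + f z = f (x + u) + f x}"
    by simp
  then have "card {z. f (z + u) + f z = f (x + u) + f x} \<noteq> 0"
    by (auto simp: card_eq_0_iff)
  ultimately show ?thesis
    by simp
qed

lemma sum_sum_of_squares_indicator_APN: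
  fixes f :: "'a::{field,finite} \<Rightarrow> 'a"
  assumes "CHAR('a) = 2" and "APN f"
  shows "(\<Sum>b\<in>UNIV. sum_of_squares_indicator f b) =
    int CARD('a) ^ 3 + (int CARD('a) - 1) * (2 * int CARD('a) ^ 2)"
proof -
  define q where "q = int CARD('a)"
  have "(\<Sum>x\<in>UNIV. int (card {z. f (z + u) + f z = f (x + u) + f x})) =
      (if u = 0 then q ^ 2 else 2 * q)" for u
    by (cases "u = 0")
       (simp_all add: add_self_CHAR_2[OF assms(1)] card_derivative_fiber_APN[OF assms(2)]
         power2_eq_square q_def)
  then have "(\<Sum>b\<in>UNIV. sum_of_squares_indicator f b) =
      q * (\<Sum>u\<in>UNIV. if u = (0::'a) then q ^ 2 else 2 * q)"
    by (simp add: sum_sum_of_squares_indicator[OF assms(1)] q_def)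
  also have "(\<Sum>u\<in>UNIV. if u = (0::'a) then q ^ 2 else 2 * q) = q ^ 2 + (q - 1) * (2 * q)"
    by (simp add: sum.If_cases Compl_eq_Diff_UNIV card_Diff_singleton of_nat_diff q_def)
  finally show ?thesis
    by (simp add: q_def algebra_simps power2_eq_square power3_eq_cube)
qed

lemma sum_of_squares_indicator_power_scale:
  fixes c :: "'a::{field,finite}"
  assumes "c \<noteq> 0"
  shows "sum_of_squares_indicator (\<lambda>x. x ^ s) (c ^ s) = sum_of_squares_indicator (\<lambda>x::'a. x ^ s) 1"
proof -
  have scale: "(\<Sum>u\<in>UNIV. g (c * u)) = (\<Sum>u\<in>UNIV. g u)" for g :: "'a \<Rightarrow> int"
    by (rule sum.reindex_bij_witness[of _ "\<lambda>y. y / c" "(*) c"]) (use assms in auto)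
  have "autocorrelation (\<lambda>x. x ^ s) (c ^ s) u = autocorrelation (\<lambda>x. x ^ s) 1 (c * u)" for u
    using scale[of "\<lambda>x. can_char ((x + c * u) ^ s + x ^ s)"]
    by (simp add: autocorrelation_def power_mult_distrib flip: distrib_left)
  then show ?thesis
    using scale[of "\<lambda>u. autocorrelation (\<lambda>x. x ^ s) 1 u ^ 2"]
    by (simp add: sum_of_squares_indicator_def)
qed

text \<open>The indicator is constant on \<open>L\<^sup>\<times>\<close>, so the total computed for APN maps determines it.\<close>
lemma sum_of_squares_indicator_APN_power_permutation:
  fixes s :: nat
  assumes "CHAR('a::{field,finite}) = 2" and "APN (\<lambda>x::'a. x ^ s)" and "bij (\<lambda>x::'a. x ^ s)"
  shows "sum_of_squares_indicator (\<lambda>x::'a. x ^ s) 1 = 2 * int CARD('a) ^ 2"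
proof -
  define G where "G = sum_of_squares_indicator (\<lambda>x::'a. x ^ s)"
  define q where "q = int CARD('a)"
  have G_eq_G_1: "G b = G 1" if "b \<noteq> 0" for b
  proof -
    obtain c where "c ^ s = b"
      using assms(3) by (metis bij_pointE)
    with that show ?thesis
      unfolding G_def by (cases "c = 0") (auto simp: sum_of_squares_indicator_power_scale)
  qed
  have "(\<Sum>b\<in>UNIV - {0}. G b) = (\<Sum>b\<in>UNIV - {0::'a}. G 1)"
    by (rule sum.cong[OF refl], rule G_eq_G_1) simp
  then have "(\<Sum>b\<in>UNIV. G b) = q ^ 3 + (q - 1) * G 1"
    by (simp add: sum.remove[of UNIV 0] card_Diff_singleton of_nat_diff q_def G_def
        sum_of_squares_indicator_0)
  then have "(q - 1) * G 1 = (q - 1) * (2 * q ^ 2)"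
    using sum_sum_of_squares_indicator_APN[OF assms(1,2)] unfolding G_def q_def by linarith
  moreover have "q - 1 \<noteq> 0"
    using card_field_ge_2[where 'a = 'a] by (simp add: q_def)
  ultimately show ?thesis
    by (simp add: G_def q_def)
qed

lemma fourier_coeff_0_bij:
  assumes "CHAR('a::{field,finite}) = 2" and "bij (f :: 'a \<Rightarrow> 'a)"
  shows "fourier_coeff f 0 = 0"
proof -
  have "fourier_coeff f 0 = (\<Sum>x\<in>UNIV. can_char (x::'a))"
    unfolding fourier_coeff_def using sum.reindex_bij_betw[OF assms(2), of can_char] by simp
  then show ?thesis
    using sum_can_char[OF assms(1)] by simp
qed

lemma sum_nonzero_fourier_coeff_power_4_APN_power_permutation:
  fixes s :: nat
  assumes "CHAR('a::{field,finite}) = 2" and "APN (\<lambda>x::'a. x ^ s)" and "bij (\<lambda>x::'a. x ^ s)"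
  shows "(\<Sum>a\<in>UNIV - {0::'a}. fourier_coeff (\<lambda>x. x ^ s) a ^ 4) = 2 * int CARD('a) ^ 3"
proof -
  have "(\<Sum>a\<in>UNIV - {0::'a}. fourier_coeff (\<lambda>x. x ^ s) a ^ 4) =
      (\<Sum>a\<in>UNIV. fourier_coeff (\<lambda>x. x ^ s) (a::'a) ^ 4)"
    using fourier_coeff_0_bij[OF assms(1,3)] by (simp add: sum.remove[of UNIV 0])
  also have "\<dots> = 2 * int CARD('a) ^ 3"
    using sum_fourier_coeff_power_4[OF assms(1)]
      sum_of_squares_indicator_APN_power_permutation[OF assms]
    by (simp add: power3_eq_cube power2_eq_square)
  finally show ?thesis .
qed

lemma power_4_mod_5: "\<not> 5 dvd w \<Longrightarrow> (w::int) ^ 4 mod 5 = 1"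
proof -
  assume "\<not> 5 dvd w"
  then have "w mod 5 \<in> {1, 2, 3, 4}"
    by (auto simp: dvd_eq_mod_eq_0)
  moreover have "w ^ 4 mod 5 = (w mod 5) ^ 4 mod 5"
    by (simp add: power_mod)
  ultimately show ?thesis
    by auto
qed

lemma sum_power_4_mod_5:
  assumes "finite A" and "\<And>a. a \<in> A \<Longrightarrow> \<not> 5 dvd w a"
  shows "(\<Sum>a\<in>A. (w a :: int) ^ 4) mod 5 = int (card A) mod 5"
proof -
  have "(\<Sum>a\<in>A. w a ^ 4) mod 5 = (\<Sum>a\<in>A. w a ^ 4 mod 5) mod 5"
    by (simp add: mod_sum_eq)
  also have "\<dots> = int (card A) mod 5"
    using assms(2) by (simp add: power_4_mod_5)
  finally show ?thesis .
qed

lemma not_5_dvd_cubic: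
  assumes "(q::int) mod 5 \<noteq> 2" and "q mod 5 \<noteq> 4"
  shows "\<not> 5 dvd 2 * q ^ 3 - q + 1"
proof
  assume "5 dvd 2 * q ^ 3 - q + 1"
  define r where "r = q mod 5"
  have "2 * q ^ 3 - q + 1 = (2 * r ^ 3 - r + 1) + (q - r) * (2 * (q\<^sup>2 + q * r + r\<^sup>2) - 1)"
    by (simp add: algebra_simps power2_eq_square power3_eq_cube)
  moreover have "5 dvd (q - r) * (2 * (q\<^sup>2 + q * r + r\<^sup>2) - 1)"
    by (simp add: r_def minus_mod_eq_mult_div)
  ultimately have "5 dvd 2 * r ^ 3 - r + 1"
    using \<open>5 dvd 2 * q ^ 3 - q + 1\<close> by (metis dvd_add_left_iff)
  moreover have "r \<in> {0, 1, 3}"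
    using assms by (auto simp: r_def)
  ultimately show False
    by auto
qed

theorem mainTheorem1:
  fixes s :: nat
  assumes "CHAR('a::{field,finite}) = 2"
    and "CARD('a) > 2"
    and "CARD('a) mod 5 \<noteq> 2" and "CARD('a) mod 5 \<noteq> 4"
    and "coprime s (CARD('a) - 1)"
    and "APN (\<lambda>x::'a. x ^ s)"
  shows "\<exists>a::'a. a \<noteq> 0 \<and> (5::int) dvd fourier_coeff (\<lambda>x. x ^ s) a"
proof (rule ccontr)
  define W where "W = fourier_coeff (\<lambda>x::'a. x ^ s)"
  define q where "q = int CARD('a)"
  assume "\<not> ?thesis"
  then have not_dvd: "\<not> 5 dvd W a" if "a \<in> UNIV - {0}" for a
    using that by (auto simp: W_def)
  have "s \<noteq> 0"
    using assms(2,5) by (intro notI) simp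
  with assms(5) have "bij (\<lambda>x::'a. x ^ s)"
    by (rule bij_power_coprime)
  then have "(\<Sum>a\<in>UNIV - {0}. W a ^ 4) = 2 * q ^ 3"
    using sum_nonzero_fourier_coeff_power_4_APN_power_permutation[OF assms(1,6)]
    by (simp add: W_def q_def)
  moreover have "(\<Sum>a\<in>UNIV - {0}. W a ^ 4) mod 5 = (q - 1) mod 5"
    using sum_power_4_mod_5[of "UNIV - {0}" W, OF _ not_dvd]
    by (simp add: card_Diff_singleton of_nat_diff q_def)
  ultimately have "5 dvd 2 * q ^ 3 - q + 1"
    by (simp add: mod_eq_dvd_iff algebra_simps)
  moreover have "q mod 5 = int (CARD('a) mod 5)"
    by (simp add: q_def zmod_int)
  then have "q mod 5 \<noteq> 2" "q mod 5 \<noteq> 4"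
    using assms(3,4) by simp_all
  ultimately show False
    using not_5_dvd_cubic by blast
qed

end
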